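(* Let $A\subset\mathbb R^\tau$ be a compact max-min convex set and let $\xi\colon J(A)\to A$ be the max-min barycenter map $\xi(\mu)=(\mu(p_\alpha))_{\alpha<\tau}$. Then $(A,\xi)$ is a $\mathbb J$-algebra, i.e. $\xi\circ\eta_A=1_A$ and $\xi\circ\psi_A=\xi\circ J(\xi)$.
   Context: A max-min measure on a compact Hausdorff space $X$ is a functional $\mu\colon C(X)\to\mathbb R$ (not assumed continuous) with $\mu(c_X)=c$ for constants, $\mu(\varphi\vee\psi)=\mu(\varphi)\vee\mu(\psi)$, $\mu(c\wedge\varphi)=c\wedge\mu(\varphi)$ for $c\in\mathbb R$; $J(X)$ is the set of max-min measures with the topology of pointwise convergence on $C(X)$; for continuous $f$, $J(f)(\mu)(\varphi)=\mu(\varphi\circ f)$. $\eta_X(x)=\delta_x$ with $\delta_x(\varphi)=\varphi(x)$; $\psi_X\colon J(J(X))\to J(X)$ is $\psi_X(M)(\varphi)=M(\bar\varphi)$, $\bar\varphi(\mu)=\mu(\varphi)$. $p_\alpha\colon A\to\mathbb R$ is the $\alpha$-th coordinate projection. A subset $A\subset\mathbb R^\tau$ is max-min convex if $x\vee(\lambda\wedge y)\in A$ for all $x,y\in A$, $\lambda\in\mathbb R$ (coordinatewise operations); for such compact $A$, $\xi$ takes values in $A$. *)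

theory Defs
  imports "HOL-Analysis.Analysis"
begin

text \<open>C(X): continuous real functions on the topological space X, represented
  canonically as extensional functions (value undefined outside topspace X).\<close>
definition Cfun :: "'a topology \<Rightarrow> ('a \<Rightarrow> real) set" where
  "Cfun X = {\<phi>. continuous_map X euclideanreal \<phi> \<and> \<phi> \<in> extensional (topspace X)}"

definition maxmin_measure :: "'a topology \<Rightarrow> (('a \<Rightarrow> real) \<Rightarrow> real) \<Rightarrow> bool" where
  "maxmin_measure X \<mu> \<longleftrightarrow>
     \<mu> \<in> extensional (Cfun X) \<and>
     (\<forall>c::real. \<mu> (restrict (\<lambda>_. c) (topspace X)) = c) \<and>
     (\<forall>\<phi>\<in>Cfun X. \<forall>\<psi>\<in>Cfun X.
        \<mu> (restrict (\<lambda>x. max (\<phi> x) (\<psi> x)) (topspace X)) = max (\<mu> \<phi>) (\<mu> \<psi>)) \<and>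
     (\<forall>c::real. \<forall>\<phi>\<in>Cfun X.
        \<mu> (restrict (\<lambda>x. min c (\<phi> x)) (topspace X)) = min c (\<mu> \<phi>))"

definition J :: "'a topology \<Rightarrow> (('a \<Rightarrow> real) \<Rightarrow> real) topology" where
  "J X = subtopology (product_topology (\<lambda>_. euclideanreal) (Cfun X)) {\<mu>. maxmin_measure X \<mu>}"

definition Jmap :: "'a topology \<Rightarrow> 'b topology \<Rightarrow> ('a \<Rightarrow> 'b)
    \<Rightarrow> (('a \<Rightarrow> real) \<Rightarrow> real) \<Rightarrow> (('b \<Rightarrow> real) \<Rightarrow> real)" where
  "Jmap X Y f \<mu> = restrict (\<lambda>\<phi>. \<mu> (restrict (\<phi> \<circ> f) (topspace X))) (Cfun Y)"

definition eta :: "'a topology \<Rightarrow> 'a \<Rightarrow> (('a \<Rightarrow> real) \<Rightarrow> real)" where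
  "eta X x = restrict (\<lambda>\<phi>. \<phi> x) (Cfun X)"

definition psi :: "'a topology \<Rightarrow> (((('a \<Rightarrow> real) \<Rightarrow> real) \<Rightarrow> real) \<Rightarrow> real)
    \<Rightarrow> (('a \<Rightarrow> real) \<Rightarrow> real)" where
  "psi X M = restrict (\<lambda>\<phi>. M (restrict (\<lambda>\<mu>. \<mu> \<phi>) (topspace (J X)))) (Cfun X)"

definition maxmin_convex :: "('i \<Rightarrow> real) set \<Rightarrow> bool" where
  "maxmin_convex A \<longleftrightarrow>
     (\<forall>x\<in>A. \<forall>y\<in>A. \<forall>l::real. (\<lambda>\<alpha>. max (x \<alpha>) (min l (y \<alpha>))) \<in> A)"

definition proj :: "('i \<Rightarrow> real) set \<Rightarrow> 'i \<Rightarrow> ('i \<Rightarrow> real) \<Rightarrow> real" where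
  "proj A \<alpha> = restrict (\<lambda>x. x \<alpha>) A"

definition xi :: "('i \<Rightarrow> real) set \<Rightarrow> ((('i \<Rightarrow> real) \<Rightarrow> real) \<Rightarrow> real) \<Rightarrow> ('i \<Rightarrow> real)" where
  "xi A \<mu> = (\<lambda>\<alpha>. \<mu> (proj A \<alpha>))"

end

theory Submission
  imports Defs
begin

text \<open>The associativity law holds coordinatewise as soon as the
  barycenter b = \<xi>(\<mu>) of every max-min measure \<mu> on A lies in A, since then \<mu> \<mapsto> \<mu>(p_\<alpha>)
  and p_\<alpha> \<circ> \<xi> agree on J(A).
  If b \<notin> A, closedness of A in the product topology yields finitely many coordinates F and
  e > 0 such that no point of A is e-close to b on F. Although \<mu> only respects \<squnion> and
  truncation by constants, ramps show \<mu>(f) \<le> L \<squnion> \<Squnion>\<beta>. \<mu>(\<phi>_\<beta>) whenever f \<le> L outside the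
  sets {\<phi>_\<beta> \<ge> c_\<beta>} with \<mu>(\<phi>_\<beta>) < c_\<beta>. By contraposition there are points y_\<alpha> \<in> A (\<alpha> \<in> F)
  with y_\<alpha>(\<alpha>) \<ge> b(\<alpha>) - e/2 and y_\<alpha>(\<beta>) \<le> b(\<beta>) + e/2 whenever b(\<beta>) < b(\<alpha>), and a point
  z \<in> A below b + e/2 on F. Their max-min combination z \<squnion> \<Squnion>\<alpha>. (b(\<alpha>) - e/2) \<sqinter> y_\<alpha> lies in A
  and is e/2-close to b on F.\<close>

lemma Max_insert_insert:
  fixes b c :: "'a::linorder"
  assumes "finite X"
  shows "Max (insert c (insert b X)) = max b (Max (insert c X))"
  using assms by (simp add: insert_commute)

lemma continuous_on_Max_insert:
  fixes w :: "'i \<Rightarrow> 'a::topological_space \<Rightarrow> 'b::linorder_topology"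
  assumes "finite G" "\<And>\<beta>. \<beta> \<in> G \<Longrightarrow> continuous_on A (w \<beta>)"
  shows "continuous_on A (\<lambda>x. Max (insert c ((\<lambda>\<beta>. w \<beta> x) ` G)))"
  using assms
proof (induction G rule: finite_induct)
  case (insert \<alpha> G)
  then show ?case
    unfolding image_insert Max_insert_insert[OF finite_imageI[OF insert(1)]]
    by (auto intro!: continuous_intros)
qed simp

lemma Max_insert_image_mono:
  fixes g h :: "'i \<Rightarrow> 'a::linorder"
  assumes "finite G" "\<And>\<beta>. \<beta> \<in> G \<Longrightarrow> g \<beta> \<le> h \<beta>"
  shows "Max (insert c (g ` G)) \<le> Max (insert c (h ` G))"
  using assms
proof (induction G rule: finite_induct)
  case (insert \<alpha> G)
  then show ?case
    unfolding image_insert Max_insert_insert[OF finite_imageI[OF insert(1)]]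
    by (intro max.mono) auto
qed simp

lemma restrict_in_Cfun:
  "continuous_on A f \<Longrightarrow> restrict f A \<in> Cfun (subtopology euclidean A)"
  unfolding Cfun_def by (simp add: continuous_on_eq[of A f])

context
  fixes A :: "'a::topological_space set" and \<mu> :: "('a \<Rightarrow> real) \<Rightarrow> real"
  assumes mu: "maxmin_measure (subtopology euclidean A) \<mu>"
begin

lemma maxmin_measure_const: "\<mu> (restrict (\<lambda>_. c) A) = c"
  using mu unfolding maxmin_measure_def by auto

lemma maxmin_measure_max:
  assumes "continuous_on A f" "continuous_on A g"
  shows "\<mu> (restrict (\<lambda>x. max (f x) (g x)) A) = max (\<mu> (restrict f A)) (\<mu> (restrict g A))"
proof -
  have "\<mu> (restrict (\<lambda>x. max (restrict f A x) (restrict g A x)) A)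
      = max (\<mu> (restrict f A)) (\<mu> (restrict g A))"
    using mu restrict_in_Cfun[OF assms(1)] restrict_in_Cfun[OF assms(2)]
    unfolding maxmin_measure_def topspace_euclidean_subtopology by blast
  moreover have "restrict (\<lambda>x. max (restrict f A x) (restrict g A x)) A
      = restrict (\<lambda>x. max (f x) (g x)) A"
    by auto
  ultimately show ?thesis by simp
qed

lemma maxmin_measure_min_const:
  assumes "continuous_on A f"
  shows "\<mu> (restrict (\<lambda>x. min c (f x)) A) = min c (\<mu> (restrict f A))"
proof -
  have "\<mu> (restrict (\<lambda>x. min c (restrict f A x)) A) = min c (\<mu> (restrict f A))"
    using mu restrict_in_Cfun[OF assms]
    unfolding maxmin_measure_def topspace_euclidean_subtopology by blast
  moreover have "restrict (\<lambda>x. min c (restrict f A x)) A = restrict (\<lambda>x. min c (f x)) A"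
    by auto
  ultimately show ?thesis by simp
qed

lemma maxmin_measure_mono:
  assumes "continuous_on A f" "continuous_on A g" "\<And>x. x \<in> A \<Longrightarrow> f x \<le> g x"
  shows "\<mu> (restrict f A) \<le> \<mu> (restrict g A)"
proof -
  have "restrict (\<lambda>x. max (f x) (g x)) A = restrict g A"
    using assms(3) by (auto simp: max_def)
  then show ?thesis using maxmin_measure_max[OF assms(1,2)] by simp
qed

lemma maxmin_measure_Max:
  assumes "finite G" "\<And>\<beta>. \<beta> \<in> G \<Longrightarrow> continuous_on A (w \<beta>)"
  shows "\<mu> (restrict (\<lambda>x. Max (insert c ((\<lambda>\<beta>. w \<beta> x) ` G))) A)
    = Max (insert c ((\<lambda>\<beta>. \<mu> (restrict (w \<beta>) A)) ` G))"
  using assms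
proof (induction G rule: finite_induct)
  case empty
  then show ?case using maxmin_measure_const[of c] by (simp add: restrict_def)
next
  case (insert \<alpha> G)
  then show ?case
    unfolding image_insert Max_insert_insert[OF finite_imageI[OF insert(1)]]
    by (simp add: maxmin_measure_max continuous_on_Max_insert del: restrict_apply)
qed

lemma maxmin_measure_le_max_threshold:
  assumes f: "continuous_on A f" and \<phi>: "continuous_on A \<phi>"
    and "L < s" "\<mu> (restrict \<phi> A) < s" and split: "\<And>x. x \<in> A \<Longrightarrow> f x \<le> L \<or> s \<le> \<phi> x"
  shows "\<mu> (restrict f A) \<le> max L (\<mu> (restrict \<phi> A))"
proof -
  have "\<mu> (restrict (\<lambda>x. min s (f x)) A) \<le> \<mu> (restrict (\<lambda>x. max L (min s (\<phi> x))) A)"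
  proof (rule maxmin_measure_mono)
    show "min s (f x) \<le> max L (min s (\<phi> x))" if "x \<in> A" for x
      using split[OF that] by linarith
  qed (auto intro!: continuous_intros f \<phi>)
  then have "min s (\<mu> (restrict f A)) \<le> max L (min s (\<mu> (restrict \<phi> A)))"
    using f \<phi> by (simp add: maxmin_measure_min_const maxmin_measure_max maxmin_measure_const
        continuous_intros)
  then show ?thesis using assms(3,4) by linarith
qed

text \<open>Max-min measures do not commute with translations, so the threshold c of \<phi> is
  lifted to an arbitrary level D by a ramp that is constant \<mu>(\<phi>) below (\<mu>(\<phi>) + c) / 2.\<close>
lemma maxmin_measure_exists_ramp:
  assumes \<phi>: "continuous_on A \<phi>" and "\<mu> (restrict \<phi> A) < c"
  obtains w where "continuous_on A w" "\<And>x. c \<le> \<phi> x \<Longrightarrow> D \<le> w x"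
    "\<mu> (restrict w A) \<le> \<mu> (restrict \<phi> A)"
proof -
  define b where "b = \<mu> (restrict \<phi> A)"
  define m where "m = (b + c) / 2"
  define K where "K = max 0 (D - b) / (c - m)"
  define w where "w x = b + K * max 0 (\<phi> x - m)" for x
  have "m < c" "b < m" using assms(2) by (simp_all add: m_def b_def)
  then have "0 \<le> K" by (simp add: K_def)
  have cont: "continuous_on A w" unfolding w_def using \<phi> by (intro continuous_intros)
  have "D \<le> w x" if "c \<le> \<phi> x" for x
  proof -
    have "K * (c - m) \<le> K * max 0 (\<phi> x - m)"
      using that \<open>0 \<le> K\<close> by (intro mult_left_mono) auto
    moreover have "K * (c - m) = max 0 (D - b)" using \<open>m < c\<close> by (simp add: K_def)
    ultimately show ?thesis unfolding w_def by linarith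
  qed
  moreover have "\<mu> (restrict w A) \<le> max b (\<mu> (restrict \<phi> A))"
  proof (rule maxmin_measure_le_max_threshold[OF cont \<phi> \<open>b < m\<close>])
    show "\<mu> (restrict \<phi> A) < m" using \<open>b < m\<close> by (simp add: b_def)
    show "w x \<le> b \<or> m \<le> \<phi> x" for x by (auto simp: w_def)
  qed
  ultimately show ?thesis using that cont by (simp add: b_def)
qed

lemma maxmin_measure_le_Max_cover:
  assumes "compact A" and f: "continuous_on A f" and "finite G"
    and \<phi>: "\<And>\<beta>. \<beta> \<in> G \<Longrightarrow> continuous_on A (\<phi> \<beta>)"
    and below: "\<And>\<beta>. \<beta> \<in> G \<Longrightarrow> \<mu> (restrict (\<phi> \<beta>) A) < c \<beta>"
    and cover: "\<And>x. x \<in> A \<Longrightarrow> f x \<le> L \<or> (\<exists>\<beta>\<in>G. c \<beta> \<le> \<phi> \<beta> x)"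
  shows "\<mu> (restrict f A) \<le> Max (insert L ((\<lambda>\<beta>. \<mu> (restrict (\<phi> \<beta>) A)) ` G))"
proof -
  obtain D where D: "\<And>x. x \<in> A \<Longrightarrow> f x \<le> D"
    using compact_imp_bounded[OF compact_continuous_image[OF f \<open>compact A\<close>]]
    unfolding bounded_real by (auto dest: abs_le_D1)
  have "\<exists>w. continuous_on A w \<and> (\<forall>x. c \<beta> \<le> \<phi> \<beta> x \<longrightarrow> D \<le> w x)
      \<and> \<mu> (restrict w A) \<le> \<mu> (restrict (\<phi> \<beta>) A)" if "\<beta> \<in> G" for \<beta>
    using maxmin_measure_exists_ramp[OF \<phi>[OF that] below[OF that], of D] by blast
  then have "\<forall>\<beta>\<in>G. \<exists>w. continuous_on A w \<and> (\<forall>x. c \<beta> \<le> \<phi> \<beta> x \<longrightarrow> D \<le> w x)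
      \<and> \<mu> (restrict w A) \<le> \<mu> (restrict (\<phi> \<beta>) A)" by blast
  from bchoice[OF this] obtain w where w: "\<forall>\<beta>\<in>G. continuous_on A (w \<beta>)
      \<and> (\<forall>x. c \<beta> \<le> \<phi> \<beta> x \<longrightarrow> D \<le> w \<beta> x) \<and> \<mu> (restrict (w \<beta>) A) \<le> \<mu> (restrict (\<phi> \<beta>) A)"
    ..
  let ?W = "\<lambda>x. Max (insert L ((\<lambda>\<beta>. w \<beta> x) ` G))"
  have cont: "continuous_on A ?W"
    using \<open>finite G\<close> w by (intro continuous_on_Max_insert) auto
  have "\<mu> (restrict f A) \<le> \<mu> (restrict ?W A)"
  proof (rule maxmin_measure_mono[OF f cont])
    fix x assume "x \<in> A"
    show "f x \<le> ?W x"
    proof (cases "f x \<le> L")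
      case True
      then show ?thesis using \<open>finite G\<close> by (intro order_trans[OF True Max_ge]) auto
    next
      case False
      then obtain \<beta> where "\<beta> \<in> G" "c \<beta> \<le> \<phi> \<beta> x" using cover[OF \<open>x \<in> A\<close>] by blast
      then have "f x \<le> w \<beta> x" using D[OF \<open>x \<in> A\<close>] w by fastforce
      also have "\<dots> \<le> ?W x" using \<open>\<beta> \<in> G\<close> \<open>finite G\<close> by simp
      finally show ?thesis .
    qed
  qed
  also have "\<dots> = Max (insert L ((\<lambda>\<beta>. \<mu> (restrict (w \<beta>) A)) ` G))"
    using \<open>finite G\<close> w by (intro maxmin_measure_Max) auto
  also have "\<dots> \<le> Max (insert L ((\<lambda>\<beta>. \<mu> (restrict (\<phi> \<beta>) A)) ` G))"
    using \<open>finite G\<close> w by (intro Max_insert_image_mono) auto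
  finally show ?thesis .
qed

lemma maxmin_measure_witness:
  assumes "compact A" and f: "continuous_on A f" and "finite G"
    and \<phi>: "\<And>\<beta>. \<beta> \<in> G \<Longrightarrow> continuous_on A (\<phi> \<beta>)"
    and "s < \<mu> (restrict f A)"
    and below: "\<And>\<beta>. \<beta> \<in> G \<Longrightarrow> \<mu> (restrict (\<phi> \<beta>) A) < min (c \<beta>) (\<mu> (restrict f A))"
  shows "\<exists>x\<in>A. s \<le> f x \<and> (\<forall>\<beta>\<in>G. \<phi> \<beta> x \<le> c \<beta>)"
proof (rule ccontr)
  assume "\<not> ?thesis"
  then have "f x \<le> s \<or> (\<exists>\<beta>\<in>G. c \<beta> \<le> \<phi> \<beta> x)" if "x \<in> A" for x
    using that by force
  then have "\<mu> (restrict f A) \<le> Max (insert s ((\<lambda>\<beta>. \<mu> (restrict (\<phi> \<beta>) A)) ` G))"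
    using below by (intro maxmin_measure_le_Max_cover[OF \<open>compact A\<close> f \<open>finite G\<close> \<phi>]) auto
  moreover have "Max (insert s ((\<lambda>\<beta>. \<mu> (restrict (\<phi> \<beta>) A)) ` G)) < \<mu> (restrict f A)"
    using \<open>s < \<mu> (restrict f A)\<close> below \<open>finite G\<close> by simp
  ultimately show False by simp
qed

end

lemma maxmin_convex_Max_min:
  assumes "maxmin_convex A" "finite F" "z \<in> A" "y ` F \<subseteq> A"
  shows "(\<lambda>\<beta>. Max (insert (z \<beta>) ((\<lambda>\<alpha>. min (c \<alpha>) (y \<alpha> \<beta>)) ` F))) \<in> A"
  using assms(2,4)
proof (induction F rule: finite_induct)
  case empty
  then show ?case using \<open>z \<in> A\<close> by simp
next
  case (insert \<alpha> F)
  then have "(\<lambda>\<beta>. max (Max (insert (z \<beta>) ((\<lambda>\<alpha>. min (c \<alpha>) (y \<alpha> \<beta>)) ` F)))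
      (min (c \<alpha>) (y \<alpha> \<beta>))) \<in> A"
    using assms(1) by (simp add: maxmin_convex_def)
  moreover have "(\<lambda>\<beta>. Max (insert (z \<beta>) ((\<lambda>\<alpha>. min (c \<alpha>) (y \<alpha> \<beta>)) ` insert \<alpha> F)))
      = (\<lambda>\<beta>. max (Max (insert (z \<beta>) ((\<lambda>\<alpha>. min (c \<alpha>) (y \<alpha> \<beta>)) ` F)))
          (min (c \<alpha>) (y \<alpha> \<beta>)))"
    unfolding image_insert Max_insert_insert[OF finite_imageI[OF insert(1)]]
    by (rule ext, rule max.commute)
  ultimately show ?case by simp
qed

lemma compact_imp_closed_fun:
  fixes A :: "('i \<Rightarrow> 'a::metric_space) set"
  assumes "compact A"
  shows "closed A"
proof -
  have "Hausdorff_space (euclidean :: ('i \<Rightarrow> 'a) topology)"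
    using Hausdorff_space_product_topology[of "\<lambda>_. euclidean :: 'a topology" UNIV]
    by (simp add: euclidean_product_topology)
  then have "closedin euclidean A"
    using compactin_imp_closedin compactin_euclidean_iff assms by blast
  then show ?thesis by (simp only: closed_closedin)
qed

lemma closed_fun_separate_point:
  fixes A :: "('i \<Rightarrow> real) set"
  assumes "closed A" "b \<notin> A"
  obtains F e where "finite F" "0 < e" "\<And>a. a \<in> A \<Longrightarrow> \<exists>i\<in>F. e \<le> \<bar>a i - b i\<bar>"
proof -
  have "open (- A)" using assms(1) by (rule open_Compl)
  then have "openin (product_topology (\<lambda>_. euclidean) UNIV) (- A)"
    by (simp only: euclidean_product_topology open_openin)
  from product_topology_open_contains_basis[OF this] assms(2)
  obtain X where X: "b \<in> Pi\<^sub>E UNIV X" "\<forall>i. openin euclidean (X i)"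
    "finite {i. X i \<noteq> topspace euclidean}" "Pi\<^sub>E UNIV X \<subseteq> - A"
    by blast
  define F where "F = {i. X i \<noteq> UNIV}"
  have "finite F" using X(3) unfolding F_def topspace_euclidean .
  have "\<exists>d>0. ball (b i) d \<subseteq> X i" for i
  proof -
    have "open (X i)" using X(2) by simp
    moreover have "b i \<in> X i" using X(1) by (simp add: PiE_iff)
    ultimately show ?thesis using open_contains_ball by blast
  qed
  then have "\<forall>i. \<exists>d. 0 < d \<and> ball (b i) d \<subseteq> X i" by blast
  from choice[OF this] obtain d where d: "\<And>i. 0 < d i" "\<And>i. ball (b i) (d i) \<subseteq> X i"
    by blast
  define e where "e = Min (insert 1 (d ` F))"
  show ?thesis
  proof
    show "finite F" by fact
    show "0 < e" using \<open>finite F\<close> d(1) by (simp add: e_def)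
    fix a assume "a \<in> A"
    show "\<exists>i\<in>F. e \<le> \<bar>a i - b i\<bar>"
    proof (rule ccontr)
      assume close: "\<not> ?thesis"
      have "a i \<in> X i" for i
      proof (cases "i \<in> F")
        case True
        have "e \<le> d i" unfolding e_def using \<open>finite F\<close> True by (intro Min_le) auto
        moreover have "\<bar>a i - b i\<bar> < e" using close True by auto
        ultimately have "a i \<in> ball (b i) (d i)" by (simp add: dist_real_def abs_minus_commute)
        then show ?thesis using d(2) by blast
      next
        case False
        then show ?thesis by (simp add: F_def)
      qed
      then show False using X(4) \<open>a \<in> A\<close> by auto
    qed
  qed
qed

lemma continuous_on_coordinate: "continuous_on A (\<lambda>x. x i)"
  using continuous_on_product_then_coordinatewise[OF continuous_on_id] .

lemma proj_in_Cfun: "proj A \<alpha> \<in> Cfun (subtopology euclidean A)"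
  unfolding proj_def by (rule restrict_in_Cfun[OF continuous_on_coordinate])

lemma xi_in:
  fixes A :: "('i \<Rightarrow> real) set"
  assumes "compact A" "maxmin_convex A" and mu: "maxmin_measure (subtopology euclidean A) \<mu>"
  shows "xi A \<mu> \<in> A"
proof (rule ccontr)
  define b where "b = xi A \<mu>"
  have b: "\<mu> (restrict (\<lambda>x. x \<beta>) A) = b \<beta>" for \<beta>
    by (simp add: b_def xi_def proj_def)
  assume "xi A \<mu> \<notin> A"
  then have "b \<notin> A" by (simp add: b_def)
  obtain F e where "finite F" "0 < e" and far: "\<And>a. a \<in> A \<Longrightarrow> \<exists>i\<in>F. e \<le> \<bar>a i - b i\<bar>"
    using closed_fun_separate_point[OF compact_imp_closed_fun[OF assms(1)] \<open>b \<notin> A\<close>] by blast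
  define \<delta> where "\<delta> = e / 2"
  have "0 < \<delta>" using \<open>0 < e\<close> by (simp add: \<delta>_def)
  note witness = maxmin_measure_witness[OF mu \<open>compact A\<close>, where \<phi> = "\<lambda>\<beta> x. x \<beta>"]
  define K where "K = Max (insert 0 (b ` F)) + 1"
  have "b \<beta> < K" if "\<beta> \<in> F" for \<beta>
    using that \<open>finite F\<close> by (simp add: K_def add.commute add_strict_increasing)
  then have "\<exists>z\<in>A. K - 1 \<le> K \<and> (\<forall>\<beta>\<in>F. z \<beta> \<le> b \<beta> + \<delta>)"
    by (intro witness[where f = "\<lambda>_. K"])
      (use \<open>finite F\<close> \<open>0 < \<delta>\<close> in \<open>auto simp: b maxmin_measure_const[OF mu] continuous_on_coordinate\<close>)
  then obtain z where z: "z \<in> A" "\<And>\<beta>. \<beta> \<in> F \<Longrightarrow> z \<beta> \<le> b \<beta> + \<delta>" by blast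
  have "\<exists>y\<in>A. b \<alpha> - \<delta> \<le> y \<alpha> \<and> (\<forall>\<beta>\<in>{\<beta>\<in>F. b \<beta> < b \<alpha>}. y \<beta> \<le> b \<beta> + \<delta>)" for \<alpha>
    by (intro witness[where f = "\<lambda>x. x \<alpha>"])
      (use \<open>finite F\<close> \<open>0 < \<delta>\<close> in \<open>auto simp: b continuous_on_coordinate\<close>)
  then have "\<forall>\<alpha>. \<exists>y. y \<in> A \<and> b \<alpha> - \<delta> \<le> y \<alpha> \<and> (\<forall>\<beta>\<in>F. b \<beta> < b \<alpha> \<longrightarrow> y \<beta> \<le> b \<beta> + \<delta>)"
    by blast
  from choice[OF this] obtain y where y: "\<forall>\<alpha>. y \<alpha> \<in> A \<and> b \<alpha> - \<delta> \<le> y \<alpha> \<alpha>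
      \<and> (\<forall>\<beta>\<in>F. b \<beta> < b \<alpha> \<longrightarrow> y \<alpha> \<beta> \<le> b \<beta> + \<delta>)"
    ..
  define a where "a \<beta> = Max (insert (z \<beta>) ((\<lambda>\<alpha>. min (b \<alpha> - \<delta>) (y \<alpha> \<beta>)) ` F))" for \<beta>
  have "y ` F \<subseteq> A" using y by blast
  then have "a \<in> A"
    unfolding a_def by (rule maxmin_convex_Max_min[OF assms(2) \<open>finite F\<close> z(1)])
  have close: "\<bar>a i - b i\<bar> \<le> \<delta>" if "i \<in> F" for i
  proof -
    have "b i - \<delta> \<le> y i i" using y by blast
    moreover have "min (b i - \<delta>) (y i i) \<le> a i"
      unfolding a_def using \<open>finite F\<close> that by (intro Max_ge) auto
    moreover have "min (b \<alpha> - \<delta>) (y \<alpha> i) \<le> b i + \<delta>" for \<alpha>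
    proof (cases "b i < b \<alpha>")
      case True
      then have "y \<alpha> i \<le> b i + \<delta>" using y that by blast
      then show ?thesis by linarith
    qed (use \<open>0 < \<delta>\<close> in linarith)
    then have "a i \<le> b i + \<delta>"
      unfolding a_def using \<open>finite F\<close> z(2)[OF that] by simp
    ultimately show ?thesis by linarith
  qed
  obtain i where "i \<in> F" "e \<le> \<bar>a i - b i\<bar>" using far[OF \<open>a \<in> A\<close>] by blast
  with close[of i] \<open>0 < e\<close> show False unfolding \<delta>_def by linarith
qed

lemma xi_eta:
  assumes "x \<in> A"
  shows "xi A (eta (subtopology euclidean A) x) = x"
proof
  fix \<alpha>
  have "xi A (eta (subtopology euclidean A) x) \<alpha> = proj A \<alpha> x"
    unfolding xi_def eta_def using proj_in_Cfun[of A \<alpha>] by simp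
  also have "\<dots> = x \<alpha>" using assms unfolding proj_def by simp
  finally show "xi A (eta (subtopology euclidean A) x) \<alpha> = x \<alpha>" .
qed

lemma xi_psi_eq_xi_Jmap:
  fixes A :: "('i \<Rightarrow> real) set"
  defines "X \<equiv> subtopology euclidean A"
  assumes xi_into: "\<And>\<mu>. \<mu> \<in> topspace (J X) \<Longrightarrow> xi A \<mu> \<in> A"
  shows "xi A (psi X M) = xi A (Jmap (J X) X (xi A) M)"
proof
  fix \<alpha>
  have proj_xi: "restrict (\<lambda>\<mu>. \<mu> (proj A \<alpha>)) (topspace (J X))
      = restrict (proj A \<alpha> \<circ> xi A) (topspace (J X))"
  proof (rule restrict_ext)
    fix \<mu> assume "\<mu> \<in> topspace (J X)"
    with xi_into show "\<mu> (proj A \<alpha>) = (proj A \<alpha> \<circ> xi A) \<mu>" by (simp add: proj_def xi_def)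
  qed
  have "xi A (psi X M) \<alpha> = M (restrict (\<lambda>\<mu>. \<mu> (proj A \<alpha>)) (topspace (J X)))"
    unfolding xi_def psi_def X_def using proj_in_Cfun[of A \<alpha>] by simp
  also have "\<dots> = M (restrict (proj A \<alpha> \<circ> xi A) (topspace (J X)))"
    by (simp only: proj_xi)
  also have "\<dots> = xi A (Jmap (J X) X (xi A) M) \<alpha>"
    unfolding xi_def Jmap_def X_def using proj_in_Cfun[of A \<alpha>] by simp
  finally show "xi A (psi X M) \<alpha> = xi A (Jmap (J X) X (xi A) M) \<alpha>" .
qed

theorem mainTheorem20:
  fixes A :: "('i \<Rightarrow> real) set"
  assumes "compact A" and "maxmin_convex A"
  shows "(\<forall>x\<in>A. xi A (eta (subtopology euclidean A) x) = x)
    \<and> (\<forall>M\<in>topspace (J (J (subtopology euclidean A))).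
         xi A (psi (subtopology euclidean A) M)
         = xi A (Jmap (J (subtopology euclidean A)) (subtopology euclidean A) (xi A) M))"
proof (intro conjI ballI)
  fix x assume "x \<in> A"
  then show "xi A (eta (subtopology euclidean A) x) = x" by (rule xi_eta)
next
  fix M
  have "xi A \<mu> \<in> A" if "\<mu> \<in> topspace (J (subtopology euclidean A))" for \<mu>
    using that xi_in[OF assms] by (simp add: J_def)
  then show "xi A (psi (subtopology euclidean A) M)
      = xi A (Jmap (J (subtopology euclidean A)) (subtopology euclidean A) (xi A) M)"
    by (rule xi_psi_eq_xi_Jmap)
qed

end
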